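(* Let $m\ge2$, $n\ge1$, $f_i:\mathbb{R}^n\to\mathbb{R}$ smooth, each with $L^g_{f_i}$-Lipschitz gradient and $L^H_{f_i}$-Lipschitz Hessian, and let the perturbations $\mathbf{n}^k\in\mathbb{R}^{mn}$ be independent over $k$ with $\mathbf{n}^k\sim\mathcal{N}(\mathbf{0},\sigma^2\mathbf{I}_{mn})$, $\sigma>0$. Fix $\boldsymbol\theta^0\in\mathbb{R}^{mn}$ and let $\Psi_{\boldsymbol\theta^0}(\mathbf{x})=F(\boldsymbol\theta^0+\sqrt{\hat{\mathbf{L}}}\mathbf{x})$. Given $\rho\ge1$, let $\alpha=\frac{1}{L^g_\Psi\rho^7}$ and $d=\frac{\sigma}{20L^H_\Psi\rho^2}$. Then for any $\mathbf{x}^0\in\mathbb{R}^{mn}$ and any $t_0,t\ge0$, the iterates $\mathbf{x}^{k+1}=\mathbf{x}^k-\alpha(\nabla\Psi_{\boldsymbol\theta^0}(\mathbf{x}^k)+\mathbf{n}^k)$ satisfy $$\mathbb{P}\Big[\Psi_{\boldsymbol\theta^0}(\mathbf{x}^{t_0+t})-\Psi_{\boldsymbol\theta^0}(\mathbf{x}^{t_0})\le-\frac{\alpha}{2}\sum_{k=0}^{t-1}\|\nabla\Psi_{\boldsymbol\theta^0}(\mathbf{x}^{t_0+k})\|^2+mn\alpha\sigma^2(t+\sqrt{t\rho}+\rho)\Big]\ge1-2e^{-\rho}.$$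
   Context: $F(\boldsymbol\theta)=\sum_{i=1}^mf_i(\boldsymbol\theta_i)$ for $\boldsymbol\theta=[\boldsymbol\theta_1^\top,\dots,\boldsymbol\theta_m^\top]^\top$. $\mathbf{L}$ is the Laplacian of an undirected graph on $\{1,\dots,m\}$, $\sqrt{\mathbf{L}}$ its unique symmetric positive semidefinite square root, $\sqrt{\hat{\mathbf{L}}}=\sqrt{\mathbf{L}}\otimes\mathbf{I}_n$. $L^g_\Psi=\|\sqrt{\mathbf{L}}\|^2\max_iL^g_{f_i}$ and $L^H_\Psi=\|\sqrt{\mathbf{L}}\|^3\max_iL^H_{f_i}$ (spectral norm). *)

theory Defs
  imports "HOL-Analysis.Analysis" "HOL-Probability.Probability"
begin

definition grad :: "('a::real_inner \<Rightarrow> real) \<Rightarrow> 'a \<Rightarrow> 'a" where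
  "grad f x = (THE D. GDERIV f x :> D)"

fun iter_dd :: "'a::real_normed_vector list \<Rightarrow> ('a \<Rightarrow> real) \<Rightarrow> 'a \<Rightarrow> real" where
  "iter_dd [] f = f"
| "iter_dd (v # vs) f = (\<lambda>x. frechet_derivative (iter_dd vs f) (at x) v)"

definition smooth_fun :: "('a::real_normed_vector \<Rightarrow> real) \<Rightarrow> bool" where
  "smooth_fun f \<longleftrightarrow> (\<forall>vs x. iter_dd vs f differentiable (at x))"

definition laplacian :: "('m::finite \<Rightarrow> 'm \<Rightarrow> bool) \<Rightarrow> real^'m^'m" where
  "laplacian E = (\<chi> i j. if i = j then real (card {k. E i k}) else if E i j then -1 else 0)"

definition psd_sqrt :: "real^'m::finite^'m \<Rightarrow> real^'m^'m" where
  "psd_sqrt A = (THE S. transpose S = S \<and> (\<forall>v. 0 \<le> v \<bullet> (S *v v)) \<and> S ** S = A)"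

text \<open>Action of the Kronecker product S \<otimes> I_n on a stacked vector x = [x_1;...;x_m], x_i \<in> R^n.\<close>
definition kron_id_apply :: "real^'m::finite^'m \<Rightarrow> real^'n^'m \<Rightarrow> real^'n^'m" where
  "kron_id_apply S x = (\<chi> i. \<Sum>j\<in>UNIV. S $ i $ j *\<^sub>R x $ j)"

definition Fsum :: "('m::finite \<Rightarrow> real^'n \<Rightarrow> real) \<Rightarrow> real^'n^'m \<Rightarrow> real" where
  "Fsum f \<theta> = (\<Sum>i\<in>UNIV. f i (\<theta> $ i))"

definition Psi :: "('m::finite \<Rightarrow> real^'n \<Rightarrow> real) \<Rightarrow> ('m \<Rightarrow> 'm \<Rightarrow> bool) \<Rightarrow> real^'n^'m
    \<Rightarrow> real^'n^'m \<Rightarrow> real" where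
  "Psi f E \<theta>0 x = Fsum f (\<theta>0 + kron_id_apply (psd_sqrt (laplacian E)) x)"

primrec gd_iter :: "('a::real_vector \<Rightarrow> 'a) \<Rightarrow> real \<Rightarrow> 'a \<Rightarrow> (nat \<Rightarrow> 'w \<Rightarrow> 'a) \<Rightarrow> 'w \<Rightarrow> nat \<Rightarrow> 'a" where
  "gd_iter g \<alpha> x0 N \<omega> 0 = x0"
| "gd_iter g \<alpha> x0 N \<omega> (Suc k) =
     gd_iter g \<alpha> x0 N \<omega> k - \<alpha> *\<^sub>R (g (gd_iter g \<alpha> x0 N \<omega> k) + N k \<omega>)"

end

theory Submission
  imports Defs
begin

(* Psi is F composed with the affine map x |-> theta0 + K x, K = sqrt(L) (x) I_n, so its
   gradient is K^T grad F (theta0 + K x), which is Lipschitz with constant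
   ||K||^2 max_i Lg_i = L^g_Psi.  With this constant the descent lemma and the step-size
   condition L^g_Psi alpha <= 1 give, for one perturbed step,
     Psi(x^{k+1}) - Psi(x^k) <= alpha/2 (|n^k|^2 - |grad Psi(x^k)|^2),
   so the claim reduces to a tail bound for the chi-square variable sum_k |n^k|^2 with
   mnt degrees of freedom.  Chernoff's inequality with E exp(|n|^2 / (4 sigma^2)) = 2^(mn/2)
   gives that bound with probability 1 - exp(-rho), which is stronger than claimed. *)

section \<open>Gradients of compositions with linear maps\<close>

lemma grad_eqI:
  assumes "GDERIV f x :> D"
  shows "grad f x = D"
  unfolding grad_def
proof (rule the_equality)
  show "GDERIV f x :> D" by (rule assms)
  fix D' assume "GDERIV f x :> D'"
  then have "(\<lambda>h. h \<bullet> D') = (\<lambda>h. h \<bullet> D)"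
    using assms unfolding gderiv_def by (rule has_derivative_unique)
  then show "D' = D" by (metis vector_eq_ldot)
qed

lemma has_gradient_grad:
  fixes f :: "'a::euclidean_space \<Rightarrow> real"
  assumes "f differentiable (at x)"
  shows "GDERIV f x :> grad f x"
proof -
  obtain f' where f': "(f has_derivative f') (at x)"
    using assms unfolding differentiable_def by blast
  have "f' = (\<lambda>h. h \<bullet> adjoint f' 1)"
    using adjoint_works[OF has_derivative_linear[OF f'], of _ 1] by (simp add: fun_eq_iff)
  with f' have "GDERIV f x :> adjoint f' 1"
    unfolding gderiv_def by simp
  then show ?thesis by (simp add: grad_eqI)
qed

lemma lipschitz_const_nonneg:
  fixes g :: "'a::euclidean_space \<Rightarrow> 'b::real_normed_vector"
  assumes "\<And>x y. norm (g x - g y) \<le> L * norm (x - y)"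
  shows "0 \<le> L"
proof -
  obtain b :: 'a where "b \<in> Basis"
    using nonempty_Basis by blast
  moreover have "0 \<le> L * norm (b - 0)"
    using assms[of b 0] norm_ge_zero order_trans by blast
  ultimately show ?thesis
    by (simp add: zero_le_mult_iff)
qed

lemma has_gradient_linear_comp:
  fixes K :: "'a::euclidean_space \<Rightarrow> 'b::euclidean_space"
  assumes "linear K" and "GDERIV F (c + K x) :> D"
  shows "GDERIV (\<lambda>x. F (c + K x)) x :> adjoint K D"
proof -
  have "((\<lambda>x. c + K x) has_derivative K) (at x)"
    using assms(1) by (auto intro!: derivative_eq_intros linear_imp_has_derivative)
  from has_derivative_compose[OF this assms(2)[unfolded gderiv_def]]
  show ?thesis
    unfolding gderiv_def by (simp add: adjoint_works[OF assms(1)])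
qed

lemma onorm_adjoint_le:
  fixes K :: "'a::euclidean_space \<Rightarrow> 'b::euclidean_space"
  assumes "linear K"
  shows "onorm (adjoint K) \<le> onorm K"
proof (rule onorm_le)
  fix y
  have bl: "bounded_linear K"
    using assms by (simp add: linear_conv_bounded_linear)
  have "(norm (adjoint K y))\<^sup>2 = K (adjoint K y) \<bullet> y"
    by (simp add: power2_norm_eq_inner adjoint_works[OF assms])
  also have "\<dots> \<le> norm (K (adjoint K y)) * norm y"
    by (rule norm_cauchy_schwarz)
  also have "\<dots> \<le> onorm K * norm (adjoint K y) * norm y"
    by (intro mult_right_mono onorm[OF bl]) simp
  finally show "norm (adjoint K y) \<le> onorm K * norm y"
    using onorm_pos_le[OF bl] by (cases "adjoint K y = 0") (auto simp: power2_eq_square mult_ac)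
qed

lemma lipschitz_gradient_linear_comp:
  fixes K :: "'a::euclidean_space \<Rightarrow> 'b::euclidean_space"
  assumes K: "linear K" "onorm K \<le> k"
    and lip: "\<And>u v. norm (G u - G v) \<le> L * norm (u - v)"
  shows "norm (adjoint K (G (c + K x)) - adjoint K (G (c + K y))) \<le> k\<^sup>2 * L * norm (x - y)"
proof -
  have bl: "bounded_linear K" "bounded_linear (adjoint K)"
    using K(1) adjoint_linear linear_conv_bounded_linear by blast+
  have k0: "0 \<le> k"
    using onorm_pos_le[OF bl(1)] K(2) by linarith
  have L0: "0 \<le> L"
    using lip by (rule lipschitz_const_nonneg)
  have "norm (adjoint K (G (c + K x)) - adjoint K (G (c + K y)))
      = norm (adjoint K (G (c + K x) - G (c + K y)))"
    by (simp add: linear_diff[OF adjoint_linear[OF K(1)]])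
  also have "\<dots> \<le> onorm (adjoint K) * norm (G (c + K x) - G (c + K y))"
    by (rule onorm[OF bl(2)])
  also have "\<dots> \<le> k * (L * norm (K (x - y)))"
    using lip[of "c + K x" "c + K y"] onorm_adjoint_le[OF K(1)] K(2) k0
    by (intro mult_mono) (auto simp: linear_diff[OF K(1)])
  also have "\<dots> \<le> k * (L * (k * norm (x - y)))"
  proof -
    have "norm (K (x - y)) \<le> k * norm (x - y)"
      using onorm[OF bl(1), of "x - y"] K(2) mult_right_mono[of _ k "norm (x - y)"]
      by (meson norm_ge_zero order_trans)
    then show ?thesis
      using k0 L0 by (intro mult_left_mono) auto
  qed
  finally show ?thesis
    by (simp add: power2_eq_square mult_ac)
qed

lemma has_gradient_Fsum:
  assumes "\<And>i. GDERIV (f i) (a $ i) :> g i"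
  shows "GDERIV (Fsum f) a :> (\<chi> i. g i)"
proof -
  have "((\<lambda>\<theta>. f i (\<theta> $ i)) has_derivative (\<lambda>h. h $ i \<bullet> g i)) (at a)" for i
    using has_derivative_compose[OF
        bounded_linear.has_derivative[OF bounded_linear_vec_nth has_derivative_ident]
        assms[of i, unfolded gderiv_def]] .
  then have "(Fsum f has_derivative (\<lambda>h. \<Sum>i\<in>UNIV. h $ i \<bullet> g i)) (at a)"
    unfolding Fsum_def[abs_def] by (rule has_derivative_sum)
  then show ?thesis
    by (simp add: gderiv_def inner_vec_def)
qed

lemma norm_vec_lambda_diff_le:
  fixes a b :: "'a::real_normed_vector^'m::finite" and g :: "'m \<Rightarrow> 'a \<Rightarrow> 'b::real_normed_vector"
  assumes "\<And>i. norm (g i (a $ i) - g i (b $ i)) \<le> L * norm (a $ i - b $ i)" and "0 \<le> L"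
  shows "norm ((\<chi> i. g i (a $ i)) - (\<chi> i. g i (b $ i))) \<le> L * norm (a - b)"
  unfolding norm_vec_def L2_set_right_distrib[OF assms(2)]
  using assms(1) by (intro L2_set_mono) simp_all

section \<open>Kronecker products with the identity\<close>

lemma linear_kron_id_apply: "linear (kron_id_apply S)"
  by (rule linearI)
    (simp_all add: kron_id_apply_def vec_eq_iff scaleR_add_right sum.distrib scaleR_sum_right mult_ac)

lemma norm_kron_id_apply_le:
  "norm (kron_id_apply S x) \<le> onorm (\<lambda>v. S *v v) * norm x"
proof -
  let ?col = "\<lambda>(z :: real^'n::finite^'m::finite) l. (\<chi> j. z $ j $ l) :: real^'m"
  let ?K = "onorm (\<lambda>v. S *v v)"
  have norm_sq_cols: "(norm z)\<^sup>2 = (\<Sum>l\<in>UNIV. (norm (?col z l))\<^sup>2)" for z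
  proof -
    have "(norm z)\<^sup>2 = (\<Sum>i\<in>UNIV. \<Sum>l\<in>UNIV. z $ i $ l * z $ i $ l)"
      by (simp add: power2_norm_eq_inner inner_vec_def)
    also have "\<dots> = (\<Sum>l\<in>UNIV. \<Sum>i\<in>UNIV. z $ i $ l * z $ i $ l)"
      by (rule sum.swap)
    finally show ?thesis
      by (simp add: power2_norm_eq_inner inner_vec_def)
  qed
  have "?col (kron_id_apply S x) l = S *v ?col x l" for l
    by (simp add: vec_eq_iff kron_id_apply_def matrix_vector_mult_def sum_component)
  then have "(norm (kron_id_apply S x))\<^sup>2 = (\<Sum>l\<in>UNIV. (norm (S *v ?col x l))\<^sup>2)"
    by (simp add: norm_sq_cols)
  also have "\<dots> \<le> (\<Sum>l\<in>UNIV. (?K * norm (?col x l))\<^sup>2)"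
    by (intro sum_mono power_mono onorm) auto
  also have "\<dots> = (?K * norm x)\<^sup>2"
    by (simp add: norm_sq_cols[of x] power_mult_distrib sum_distrib_left)
  finally show ?thesis
    using onorm_pos_le[of "\<lambda>v. S *v v"] by (simp add: power2_le_iff_abs_le)
qed

lemma onorm_kron_id_apply_le: "onorm (kron_id_apply S) \<le> onorm (\<lambda>v. S *v v)"
  by (rule onorm_le) (rule norm_kron_id_apply_le)

lemma has_gradient_Fsum_kron_comp:
  fixes f :: "'m::finite \<Rightarrow> real^'n::finite \<Rightarrow> real"
  assumes "\<And>i y. f i differentiable (at y)"
  shows "GDERIV (\<lambda>x. Fsum f (\<theta>0 + kron_id_apply S x)) x
           :> grad (\<lambda>x. Fsum f (\<theta>0 + kron_id_apply S x)) x"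
    and "grad (\<lambda>x. Fsum f (\<theta>0 + kron_id_apply S x)) x
           = adjoint (kron_id_apply S) (\<chi> i. grad (f i) ((\<theta>0 + kron_id_apply S x) $ i))"
proof -
  have "GDERIV (\<lambda>x. Fsum f (\<theta>0 + kron_id_apply S x)) x
          :> adjoint (kron_id_apply S) (\<chi> i. grad (f i) ((\<theta>0 + kron_id_apply S x) $ i))"
    using assms
    by (intro has_gradient_linear_comp linear_kron_id_apply has_gradient_Fsum has_gradient_grad)
  then show "GDERIV (\<lambda>x. Fsum f (\<theta>0 + kron_id_apply S x)) x
               :> grad (\<lambda>x. Fsum f (\<theta>0 + kron_id_apply S x)) x"
    and "grad (\<lambda>x. Fsum f (\<theta>0 + kron_id_apply S x)) x
           = adjoint (kron_id_apply S) (\<chi> i. grad (f i) ((\<theta>0 + kron_id_apply S x) $ i))"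
    by (simp_all add: grad_eqI)
qed

lemma lipschitz_grad_Fsum_kron_comp:
  fixes f :: "'m::finite \<Rightarrow> real^'n::finite \<Rightarrow> real"
  assumes diff: "\<And>i y. f i differentiable (at y)"
    and lip: "\<And>i x y. norm (grad (f i) x - grad (f i) y) \<le> Lg i * norm (x - y)"
  shows "norm (grad (\<lambda>x. Fsum f (\<theta>0 + kron_id_apply S x)) x
               - grad (\<lambda>x. Fsum f (\<theta>0 + kron_id_apply S x)) y)
         \<le> (onorm (\<lambda>v. S *v v))\<^sup>2 * Max (range Lg) * norm (x - y)"
proof -
  have Lg_le: "Lg i \<le> Max (range Lg)" for i
    by (rule Max_ge) auto
  have "0 \<le> Lg i" for i
    using lip by (rule lipschitz_const_nonneg)
  then have Max_nonneg: "0 \<le> Max (range Lg)"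
    using Lg_le order_trans by blast
  have "norm (grad (f i) u - grad (f i) v) \<le> Max (range Lg) * norm (u - v)" for i u v
    by (rule order_trans[OF lip mult_right_mono[OF Lg_le norm_ge_zero]])
  then have "norm ((\<chi> i. grad (f i) (a $ i)) - (\<chi> i. grad (f i) (b $ i)))
      \<le> Max (range Lg) * norm (a - b)" for a b :: "real^'n^'m"
    using Max_nonneg by (rule norm_vec_lambda_diff_le)
  then show ?thesis
    unfolding has_gradient_Fsum_kron_comp(2)[OF diff]
    by (rule lipschitz_gradient_linear_comp[OF linear_kron_id_apply onorm_kron_id_apply_le])
qed

section \<open>Perturbed gradient descent\<close>

lemma lipschitz_gradient_upper_bound:
  fixes F :: "'a::real_inner \<Rightarrow> real"
  assumes gd: "\<And>x. GDERIV F x :> G x"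
    and lip: "\<And>x y. norm (G x - G y) \<le> L * norm (x - y)"
  shows "F y \<le> F x + G x \<bullet> (y - x) + L / 2 * (norm (y - x))\<^sup>2"
proof -
  define h where "h = y - x"
  define \<phi> where "\<phi> s = F (x + s *\<^sub>R h) - s * (G x \<bullet> h) - L / 2 * s\<^sup>2 * (norm h)\<^sup>2" for s
  have dF: "((\<lambda>s. F (x + s *\<^sub>R h)) has_real_derivative h \<bullet> G (x + s *\<^sub>R h)) (at s)" for s
  proof -
    have "((\<lambda>s. x + s *\<^sub>R h) has_derivative (\<lambda>s. s *\<^sub>R h)) (at s)"
      by (auto intro!: derivative_eq_intros)
    from has_derivative_compose[OF this gd[of "x + s *\<^sub>R h", unfolded gderiv_def]]
    moreover have "(\<lambda>t. t *\<^sub>R h \<bullet> G (x + s *\<^sub>R h)) = (*) (h \<bullet> G (x + s *\<^sub>R h))"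
      by (auto simp: fun_eq_iff)
    ultimately show ?thesis
      unfolding has_field_derivative_def by simp
  qed
  have d\<phi>: "(\<phi> has_real_derivative h \<bullet> G (x + s *\<^sub>R h) - G x \<bullet> h - L * s * (norm h)\<^sup>2) (at s)"
    for s
    unfolding \<phi>_def[abs_def] by (rule derivative_eq_intros dF refl | simp)+
  have "\<phi> 1 \<le> \<phi> 0"
  proof (rule DERIV_nonpos_imp_nonincreasing[of 0 1])
    fix s :: real assume s: "0 \<le> s" "s \<le> 1"
    have "h \<bullet> G (x + s *\<^sub>R h) - G x \<bullet> h = (G (x + s *\<^sub>R h) - G x) \<bullet> h"
      by (simp add: inner_diff_left inner_diff_right inner_commute)
    also have "\<dots> \<le> norm (G (x + s *\<^sub>R h) - G x) * norm h"
      by (rule norm_cauchy_schwarz)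
    also have "\<dots> \<le> L * norm (x + s *\<^sub>R h - x) * norm h"
      by (intro mult_right_mono lip) auto
    also have "\<dots> = L * s * (norm h)\<^sup>2"
      using s by (simp add: power2_eq_square)
    finally show "\<exists>y. (\<phi> has_real_derivative y) (at s) \<and> y \<le> 0"
      using d\<phi>[of s] by auto
  qed simp
  then show ?thesis
    unfolding \<phi>_def h_def by (simp add: inner_commute)
qed

lemma perturbed_gradient_step_decrease:
  fixes F :: "'a::real_inner \<Rightarrow> real"
  assumes gd: "\<And>x. GDERIV F x :> G x"
    and lip: "\<And>x y. norm (G x - G y) \<le> L * norm (x - y)"
    and \<alpha>: "0 \<le> \<alpha>" "L * \<alpha>\<^sup>2 \<le> \<alpha>"
  shows "F (x - \<alpha> *\<^sub>R (G x + n)) - F x \<le> \<alpha> / 2 * ((norm n)\<^sup>2 - (norm (G x))\<^sup>2)"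
proof -
  let ?g = "G x"
  have "F (x - \<alpha> *\<^sub>R (?g + n)) \<le> F x - \<alpha> * (?g \<bullet> (?g + n)) + L / 2 * (\<alpha>\<^sup>2 * (norm (?g + n))\<^sup>2)"
    using lipschitz_gradient_upper_bound[OF gd lip, of "x - \<alpha> *\<^sub>R (?g + n)" x] \<alpha>(1)
    by (simp add: power_mult_distrib)
  also have "L / 2 * (\<alpha>\<^sup>2 * (norm (?g + n))\<^sup>2) \<le> \<alpha> / 2 * (norm (?g + n))\<^sup>2"
    using \<alpha>(2) by (simp add: mult.assoc[symmetric] mult_right_mono)
  finally show ?thesis
    by (simp add: power2_norm_eq_inner inner_add_left inner_add_right inner_commute algebra_simps)
qed

lemma gd_iter_decrease:
  fixes F :: "'a::real_inner \<Rightarrow> real"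
  assumes gd: "\<And>x. GDERIV F x :> G x"
    and lip: "\<And>x y. norm (G x - G y) \<le> L * norm (x - y)"
    and \<alpha>: "0 \<le> \<alpha>" "L * \<alpha>\<^sup>2 \<le> \<alpha>"
  shows "F (gd_iter G \<alpha> x0 N \<omega> (t0 + t)) - F (gd_iter G \<alpha> x0 N \<omega> t0)
     \<le> - \<alpha> / 2 * (\<Sum>k<t. (norm (G (gd_iter G \<alpha> x0 N \<omega> (t0 + k))))\<^sup>2)
       + \<alpha> / 2 * (\<Sum>k<t. (norm (N (t0 + k) \<omega>))\<^sup>2)"
proof (induction t)
  case (Suc t)
  with perturbed_gradient_step_decrease[OF gd lip \<alpha>,
      of "gd_iter G \<alpha> x0 N \<omega> (t0 + t)" "N (t0 + t) \<omega>"]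
  show ?case by (simp add: algebra_simps)
qed simp

lemma gd_iter_measurable:
  fixes G :: "'a::euclidean_space \<Rightarrow> 'a"
  assumes "G \<in> borel_measurable borel" and "\<And>k. N k \<in> borel_measurable M"
  shows "(\<lambda>\<omega>. gd_iter G \<alpha> x0 N \<omega> k) \<in> borel_measurable M"
  by (induction k) (auto intro!: borel_measurable_diff borel_measurable_scaleR borel_measurable_add
      measurable_compose[OF _ assms(1)] assms(2))

lemma borel_measurable_lipschitz_gradient:
  fixes F :: "'a::euclidean_space \<Rightarrow> real"
  assumes gd: "\<And>x. GDERIV F x :> G x"
    and lip: "\<And>x y. norm (G x - G y) \<le> L * norm (x - y)"
  shows "F \<in> borel_measurable borel" and "G \<in> borel_measurable borel"
proof -
  have "continuous_on UNIV F"
    using gd unfolding gderiv_def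
    by (intro continuous_at_imp_continuous_on ballI has_derivative_continuous) blast
  then show "F \<in> borel_measurable borel"
    by (rule borel_measurable_continuous_onI)
  have "continuous_on UNIV G"
    by (rule lipschitz_on_continuous_on[of L], rule lipschitz_onI)
      (simp_all add: dist_norm lip lipschitz_const_nonneg[OF lip])
  then show "G \<in> borel_measurable borel"
    by (rule borel_measurable_continuous_onI)
qed

lemma step_size_inverse_lipschitz:
  fixes L c :: real
  assumes "0 \<le> L" "1 \<le> c"
  shows "0 \<le> 1 / (L * c)" and "L * (1 / (L * c))\<^sup>2 \<le> 1 / (L * c)"
proof -
  show "0 \<le> 1 / (L * c)"
    using assms by simp
  show "L * (1 / (L * c))\<^sup>2 \<le> 1 / (L * c)"
  proof (cases "L = 0")
    case False
    then have "L * (1 / (L * c))\<^sup>2 = 1 / (L * c) * (1 / c)"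
      using assms by (simp add: power2_eq_square)
    also have "\<dots> \<le> 1 / (L * c) * 1"
      using assms by (intro mult_left_mono) auto
    finally show ?thesis
      by simp
  qed simp
qed

section \<open>A chi-square tail bound\<close>

lemma normal_density_mult_exp_sq:
  assumes "\<sigma> > 0"
  shows "normal_density 0 \<sigma> x * exp (x\<^sup>2 / (4 * \<sigma>\<^sup>2)) = normal_density 0 \<sigma> (x / sqrt 2)"
proof -
  have "exp (- (x\<^sup>2 / (2 * \<sigma>\<^sup>2))) * exp (x\<^sup>2 / (4 * \<sigma>\<^sup>2)) = exp (- ((x / sqrt 2)\<^sup>2 / (2 * \<sigma>\<^sup>2)))"
    unfolding mult_exp_exp using assms by (simp add: power_divide)
  then show ?thesis
    by (simp add: normal_density_def mult.assoc)
qed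

lemma prod_normal_density_mult_exp_norm_sq:
  fixes v :: "real^'n::finite^'m::finite"
  assumes "\<sigma> > 0"
  shows "(\<Prod>i\<in>UNIV. \<Prod>j\<in>UNIV. normal_density 0 \<sigma> (v $ i $ j)) * exp ((norm v)\<^sup>2 / (4 * \<sigma>\<^sup>2))
     = (\<Prod>i\<in>UNIV. \<Prod>j\<in>UNIV. normal_density 0 \<sigma> ((v /\<^sub>R sqrt 2) $ i $ j))"
proof -
  have "(norm v)\<^sup>2 / (4 * \<sigma>\<^sup>2) = (\<Sum>i\<in>UNIV. \<Sum>j\<in>UNIV. (v $ i $ j)\<^sup>2 / (4 * \<sigma>\<^sup>2))"
    unfolding power2_norm_eq_inner by (simp add: inner_vec_def power2_eq_square sum_divide_distrib)
  then have "exp ((norm v)\<^sup>2 / (4 * \<sigma>\<^sup>2)) = (\<Prod>i\<in>UNIV. \<Prod>j\<in>UNIV. exp ((v $ i $ j)\<^sup>2 / (4 * \<sigma>\<^sup>2)))"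
    by (simp add: exp_sum)
  moreover have "(v /\<^sub>R sqrt 2) $ i $ j = v $ i $ j / sqrt 2" for i j
    by (simp add: divide_inverse_commute)
  ultimately show ?thesis
    by (simp add: prod.distrib[symmetric] normal_density_mult_exp_sq[OF assms])
qed

lemma nn_integral_exp_norm_sq_gaussian:
  fixes X :: "'w \<Rightarrow> real^'n::finite^'m::finite"
  assumes P: "prob_space M"
    and D: "distributed M lborel X (\<lambda>v. ennreal (\<Prod>i\<in>UNIV. \<Prod>j\<in>UNIV. normal_density 0 \<sigma> (v $ i $ j)))"
    and \<sigma>: "\<sigma> > 0"
  shows "(\<integral>\<^sup>+\<omega>. exp ((norm (X \<omega>))\<^sup>2 / (4 * \<sigma>\<^sup>2)) \<partial>M) = ennreal (sqrt 2 ^ (CARD('m) * CARD('n)))"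
proof -
  define g where "g v = (\<Prod>i\<in>UNIV. \<Prod>j\<in>UNIV. normal_density 0 \<sigma> (v $ i $ j))" for v :: "real^'n^'m"
  have g_nonneg: "0 \<le> g v" for v
    unfolding g_def by (intro prod_nonneg) auto
  have [measurable]: "(\<lambda>v::real^'n^'m. v $ i $ j) \<in> borel_measurable borel" for i j
    by (intro borel_measurable_continuous_onI continuous_intros)
  have [measurable]: "g \<in> borel_measurable borel"
    unfolding g_def by measurable
  have "(\<integral>\<^sup>+\<omega>. exp ((norm (X \<omega>))\<^sup>2 / (4 * \<sigma>\<^sup>2)) \<partial>M)
      = (\<integral>\<^sup>+v. ennreal (g v) * ennreal (exp ((norm v)\<^sup>2 / (4 * \<sigma>\<^sup>2))) \<partial>lborel)"
    using distributed_nn_integral[OF D[folded g_def], of "\<lambda>v. exp ((norm v)\<^sup>2 / (4 * \<sigma>\<^sup>2))"]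
    by simp
  also have "\<dots> = (\<integral>\<^sup>+v. ennreal (g (v /\<^sub>R sqrt 2)) \<partial>lborel)"
  proof (rule nn_integral_cong)
    fix v
    have "g v * exp ((norm v)\<^sup>2 / (4 * \<sigma>\<^sup>2)) = g (v /\<^sub>R sqrt 2)"
      unfolding g_def by (rule prod_normal_density_mult_exp_norm_sq[OF \<sigma>])
    then show "ennreal (g v) * ennreal (exp ((norm v)\<^sup>2 / (4 * \<sigma>\<^sup>2))) = ennreal (g (v /\<^sub>R sqrt 2))"
      using g_nonneg[of v] by (simp add: ennreal_mult[symmetric])
  qed
  \<comment> \<open>Substitute v = sqrt 2 u; the Jacobian is sqrt 2 to the dimension.\<close>
  also have "\<dots> = ennreal (sqrt 2 ^ DIM(real^'n^'m)) * (\<integral>\<^sup>+u. ennreal (g u) \<partial>lborel)"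
    by (subst lborel_affine[of "sqrt 2" 0])
      (simp_all add: nn_integral_density nn_integral_distr nn_integral_cmult)
  also have "(\<integral>\<^sup>+u. ennreal (g u) \<partial>lborel) = 1"
    using distributed_nn_integral[OF D[folded g_def], of "\<lambda>_. 1"] prob_space.emeasure_space_1[OF P]
    by simp
  finally show ?thesis
    by simp
qed

lemma nn_integral_exp_sum_norm_sq_gaussian:
  fixes N :: "'i \<Rightarrow> 'w \<Rightarrow> real^'n::finite^'m::finite"
  assumes P: "prob_space M"
    and indep: "prob_space.indep_vars M (\<lambda>_. borel) N I"
    and gauss: "\<And>k. k \<in> I \<Longrightarrow> distributed M lborel (N k)
                     (\<lambda>v. ennreal (\<Prod>i\<in>UNIV. \<Prod>j\<in>UNIV. normal_density 0 \<sigma> (v $ i $ j)))"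
    and I: "finite I" and \<sigma>: "\<sigma> > 0"
  shows "(\<integral>\<^sup>+\<omega>. exp ((\<Sum>k\<in>I. (norm (N k \<omega>))\<^sup>2) / (4 * \<sigma>\<^sup>2)) \<partial>M)
           = ennreal (sqrt 2 ^ (CARD('m) * CARD('n) * card I))"
proof -
  interpret prob_space M by (rule P)
  have "(\<integral>\<^sup>+\<omega>. exp ((\<Sum>k\<in>I. (norm (N k \<omega>))\<^sup>2) / (4 * \<sigma>\<^sup>2)) \<partial>M)
      = (\<integral>\<^sup>+\<omega>. (\<Prod>k\<in>I. ennreal (exp ((norm (N k \<omega>))\<^sup>2 / (4 * \<sigma>\<^sup>2)))) \<partial>M)"
    by (simp add: exp_sum[OF I] sum_divide_distrib prod_ennreal)
  also have "\<dots> = (\<Prod>k\<in>I. \<integral>\<^sup>+\<omega>. exp ((norm (N k \<omega>))\<^sup>2 / (4 * \<sigma>\<^sup>2)) \<partial>M)"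
    using indep_vars_compose2[OF indep, of "\<lambda>k v. ennreal (exp ((norm v)\<^sup>2 / (4 * \<sigma>\<^sup>2)))"]
    by (intro indep_vars_nn_integral[OF I]) auto
  also have "\<dots> = ennreal (sqrt 2 ^ (CARD('m) * CARD('n) * card I))"
    using nn_integral_exp_norm_sq_gaussian[OF P gauss \<sigma>]
    by (simp add: ennreal_power power_mult)
  finally show ?thesis .
qed

lemma chi_square_tail_exponent_le:
  fixes D t \<rho> :: real
  assumes "2 \<le> D" "0 \<le> t" "0 \<le> \<rho>"
  shows "D * t * ln 2 / 2 - D * (t + sqrt (t * \<rho>) + \<rho>) / 2 \<le> - \<rho>"
proof -
  have "D * t * ln 2 \<le> D * t"
    using ln_2_less_1 assms by (intro mult_left_le) auto
  moreover have "0 \<le> D * sqrt (t * \<rho>)"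
    using assms by simp
  moreover have "2 * \<rho> \<le> D * \<rho>"
    using assms by (intro mult_right_mono) auto
  ultimately show ?thesis
    by (simp add: field_simps)
qed

lemma gaussian_sum_norm_sq_tail:
  fixes N :: "'i \<Rightarrow> 'w \<Rightarrow> real^'n::finite^'m::finite"
  assumes P: "prob_space M"
    and indep: "prob_space.indep_vars M (\<lambda>_. borel) N I"
    and gauss: "\<And>k. k \<in> I \<Longrightarrow> distributed M lborel (N k)
                     (\<lambda>v. ennreal (\<Prod>i\<in>UNIV. \<Prod>j\<in>UNIV. normal_density 0 \<sigma> (v $ i $ j)))"
    and I: "finite I" and \<sigma>: "\<sigma> > 0" and \<rho>: "0 \<le> \<rho>" and D2: "2 \<le> CARD('m) * CARD('n)"
  shows "1 - exp (- \<rho>) \<le> measure M {\<omega> \<in> space M. (\<Sum>k\<in>I. (norm (N k \<omega>))\<^sup>2)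
            \<le> 2 * real (CARD('m) * CARD('n)) * \<sigma>\<^sup>2 * (real (card I) + sqrt (real (card I) * \<rho>) + \<rho>)}"
    (is "_ \<le> measure M {\<omega> \<in> space M. ?Y \<omega> \<le> ?a}")
proof -
  interpret prob_space M by (rule P)
  define D where "D = CARD('m) * CARD('n)"
  define s where "s = 1 / (4 * \<sigma>\<^sup>2)"
  have "k \<in> I \<Longrightarrow> N k \<in> borel_measurable M" for k
    using distributed_measurable[OF gauss] by simp
  then have [measurable]: "?Y \<in> borel_measurable M"
    by (auto intro!: borel_measurable_sum borel_measurable_power
        measurable_compose[OF _ borel_measurable_norm])
  have mgf: "(\<integral>\<^sup>+\<omega>. exp (s * ?Y \<omega>) \<partial>M) = ennreal (sqrt 2 ^ (D * card I))"
    using nn_integral_exp_sum_norm_sq_gaussian[OF P indep gauss I \<sigma>]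
    by (simp add: s_def D_def)
  have "emeasure M {\<omega> \<in> space M. ?a \<le> ?Y \<omega>}
      \<le> ennreal (exp (- s * ?a)) * (\<integral>\<^sup>+\<omega>. ennreal (exp (s * ?Y \<omega>)) * indicator (space M) \<omega> \<partial>M)"
    using \<sigma> by (intro Chernoff_ineq_nn_integral_ge) (simp_all add: s_def)
  also have "(\<integral>\<^sup>+\<omega>. ennreal (exp (s * ?Y \<omega>)) * indicator (space M) \<omega> \<partial>M) = (\<integral>\<^sup>+\<omega>. exp (s * ?Y \<omega>) \<partial>M)"
    by (intro nn_integral_cong) simp
  also have "ennreal (exp (- s * ?a)) * \<dots> \<le> ennreal (exp (- \<rho>))"
  proof -
    define r where "r = real (card I) + sqrt (real (card I) * \<rho>) + \<rho>"
    have "- s * ?a = - (real D * r / 2)"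
      using \<sigma> by (simp add: s_def D_def r_def)
    moreover have "sqrt 2 ^ (D * card I) = exp (real D * real (card I) * ln 2 / 2)"
      by (simp add: powr_realpow[symmetric] powr_def ln_sqrt)
    moreover have "real D * real (card I) * ln 2 / 2 - real D * r / 2 \<le> - \<rho>"
      unfolding r_def using D2 \<rho> by (intro chi_square_tail_exponent_le) (simp_all flip: D_def)
    ultimately have "exp (- s * ?a) * sqrt 2 ^ (D * card I) \<le> exp (- \<rho>)"
      by (simp add: mult_exp_exp)
    then show ?thesis
      by (simp add: mgf ennreal_mult[symmetric])
  qed
  finally have "prob {\<omega> \<in> space M. ?a \<le> ?Y \<omega>} \<le> exp (- \<rho>)"
    by (simp add: emeasure_eq_measure)
  moreover have "prob (space M - {\<omega> \<in> space M. ?a \<le> ?Y \<omega>}) \<le> prob {\<omega> \<in> space M. ?Y \<omega> \<le> ?a}"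
    by (intro finite_measure_mono) auto
  ultimately show ?thesis
    by (simp add: prob_compl)
qed

lemma perturbed_gd_descent_with_high_probability:
  fixes F :: "real^'n::finite^'m::finite \<Rightarrow> real" and N :: "nat \<Rightarrow> 'w \<Rightarrow> real^'n^'m"
  assumes P: "prob_space M"
    and indep: "prob_space.indep_vars M (\<lambda>_. borel) N UNIV"
    and gauss: "\<And>k. distributed M lborel (N k)
                     (\<lambda>v. ennreal (\<Prod>i\<in>UNIV. \<Prod>j\<in>UNIV. normal_density 0 \<sigma> (v $ i $ j)))"
    and \<sigma>: "\<sigma> > 0" and \<rho>: "0 \<le> \<rho>" and D2: "2 \<le> CARD('m) * CARD('n)"
    and gd: "\<And>x. GDERIV F x :> grad F x"
    and lip: "\<And>x y. norm (grad F x - grad F y) \<le> L * norm (x - y)"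
    and \<alpha>: "0 \<le> \<alpha>" "L * \<alpha>\<^sup>2 \<le> \<alpha>"
  shows "1 - exp (- \<rho>) \<le> measure M {\<omega> \<in> space M.
          F (gd_iter (grad F) \<alpha> x0 N \<omega> (t0 + t)) - F (gd_iter (grad F) \<alpha> x0 N \<omega> t0)
            \<le> - \<alpha> / 2 * (\<Sum>k<t. (norm (grad F (gd_iter (grad F) \<alpha> x0 N \<omega> (t0 + k))))\<^sup>2)
              + real (CARD('m) * CARD('n)) * \<alpha> * \<sigma>\<^sup>2 * (real t + sqrt (real t * \<rho>) + \<rho>)}"
    (is "_ \<le> measure M ?A")
proof -
  interpret prob_space M by (rule P)
  let ?x = "gd_iter (grad F) \<alpha> x0 N"
  let ?a = "2 * real (CARD('m) * CARD('n)) * \<sigma>\<^sup>2 * (real t + sqrt (real t * \<rho>) + \<rho>)"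
  note [measurable] = borel_measurable_lipschitz_gradient[OF gd lip]
  have "N k \<in> borel_measurable M" for k
    using distributed_measurable[OF gauss] by simp
  then have x_meas: "(\<lambda>\<omega>. ?x \<omega> k) \<in> borel_measurable M" for k
    by (intro gd_iter_measurable) measurable
  have inj: "inj_on ((+) t0) {..<t}"
    by simp
  have "1 - exp (- \<rho>) \<le> measure M {\<omega> \<in> space M. (\<Sum>k<t. (norm (N (t0 + k) \<omega>))\<^sup>2) \<le> ?a}"
    using gaussian_sum_norm_sq_tail[OF P indep_vars_subset[OF indep] gauss _ \<sigma> \<rho> D2,
        of "(+) t0 ` {..<t}"]
    unfolding sum.reindex[OF inj] card_image[OF inj] by simp
  also have "\<dots> \<le> measure M ?A"
  proof (rule finite_measure_mono)
    have "(\<lambda>\<omega>. F (?x \<omega> k)) \<in> borel_measurable M"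
      and "(\<lambda>\<omega>. norm (grad F (?x \<omega> k))) \<in> borel_measurable M" for k
      using x_meas by measurable
    then show "?A \<in> events"
      by (intro borel_measurable_le borel_measurable_diff borel_measurable_add borel_measurable_times
          borel_measurable_const borel_measurable_sum borel_measurable_power)
    show "{\<omega> \<in> space M. (\<Sum>k<t. (norm (N (t0 + k) \<omega>))\<^sup>2) \<le> ?a} \<subseteq> ?A"
    proof (safe)
      fix \<omega> assume "\<omega> \<in> space M" and noise: "(\<Sum>k<t. (norm (N (t0 + k) \<omega>))\<^sup>2) \<le> ?a"
      have "\<alpha> / 2 * (\<Sum>k<t. (norm (N (t0 + k) \<omega>))\<^sup>2) \<le> \<alpha> / 2 * ?a"
        using noise \<alpha>(1) by (intro mult_left_mono) auto
      moreover have "\<alpha> / 2 * ?a = real (CARD('m) * CARD('n)) * \<alpha> * \<sigma>\<^sup>2 * (real t + sqrt (real t * \<rho>) + \<rho>)"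
        by simp
      ultimately show "F (?x \<omega> (t0 + t)) - F (?x \<omega> t0)
            \<le> - \<alpha> / 2 * (\<Sum>k<t. (norm (grad F (?x \<omega> (t0 + k))))\<^sup>2)
              + real (CARD('m) * CARD('n)) * \<alpha> * \<sigma>\<^sup>2 * (real t + sqrt (real t * \<rho>) + \<rho>)"
        using gd_iter_decrease[OF gd lip \<alpha>, of x0 N \<omega> t0 t] by linarith
    qed
  qed
  finally show ?thesis .
qed

theorem lemma2:
  fixes f :: "'m::finite \<Rightarrow> real^'n::finite \<Rightarrow> real"
    and E :: "'m \<Rightarrow> 'm \<Rightarrow> bool"
    and Lg LH :: "'m \<Rightarrow> real"
    and M :: "'w measure"
    and N :: "nat \<Rightarrow> 'w \<Rightarrow> real^'n^'m"
    and \<sigma> \<rho> :: real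
    and \<theta>0 x0 :: "real^'n^'m"
    and t0 t :: nat
  assumes m2: "CARD('m) \<ge> 2"
    and E_sym: "\<And>i j. E i j \<longleftrightarrow> E j i"
    and E_irrefl: "\<And>i. \<not> E i i"
    and smooth: "\<And>i. smooth_fun (f i)"
    and grad_lip: "\<And>i x y. norm (grad (f i) x - grad (f i) y) \<le> Lg i * norm (x - y)"
    and hess_lip: "\<And>i x y. onorm (\<lambda>h. frechet_derivative (grad (f i)) (at x) h
                                     - frechet_derivative (grad (f i)) (at y) h)
                           \<le> LH i * norm (x - y)"
    and P: "prob_space M"
    and N_indep: "prob_space.indep_vars M (\<lambda>_. borel) N UNIV"
    and N_gauss: "\<And>k. distributed M lborel (N k)
                     (\<lambda>v. ennreal (\<Prod>i\<in>UNIV. \<Prod>j\<in>UNIV. normal_density 0 \<sigma> (v $ i $ j)))"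
    and \<sigma>_pos: "\<sigma> > 0"
    and \<rho>_ge: "\<rho> \<ge> 1"
  shows
    "let S = psd_sqrt (laplacian E);
         LgPsi = (onorm (\<lambda>v. S *v v))^2 * Max (range Lg);
         LHPsi = (onorm (\<lambda>v. S *v v))^3 * Max (range LH);
         \<alpha> = 1 / (LgPsi * \<rho>^7);
         d = \<sigma> / (20 * LHPsi * \<rho>^2);
         \<Psi> = Psi f E \<theta>0;
         x = gd_iter (grad \<Psi>) \<alpha> x0 N
     in measure M {\<omega> \<in> space M.
          \<Psi> (x \<omega> (t0 + t)) - \<Psi> (x \<omega> t0)
            \<le> - \<alpha> / 2 * (\<Sum>k<t. (norm (grad \<Psi> (x \<omega> (t0 + k))))^2)
              + real (CARD('m) * CARD('n)) * \<alpha> * \<sigma>^2 * (real t + sqrt (real t * \<rho>) + \<rho>)}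
        \<ge> 1 - 2 * exp (- \<rho>)"
proof -
  define S where "S = psd_sqrt (laplacian E)"
  define LgPsi where "LgPsi = (onorm (\<lambda>v. S *v v))\<^sup>2 * Max (range Lg)"
  define \<alpha> where "\<alpha> = 1 / (LgPsi * \<rho>^7)"
  have Psi_eq: "Psi f E \<theta>0 = (\<lambda>x. Fsum f (\<theta>0 + kron_id_apply S x))"
    by (simp add: Psi_def S_def fun_eq_iff)
  have diff: "f i differentiable (at y)" for i y
    using smooth[of i] unfolding smooth_fun_def by (metis iter_dd.simps(1))
  have gd: "GDERIV (Psi f E \<theta>0) x :> grad (Psi f E \<theta>0) x" for x
    unfolding Psi_eq using diff by (rule has_gradient_Fsum_kron_comp(1))
  have lip: "norm (grad (Psi f E \<theta>0) x - grad (Psi f E \<theta>0) y) \<le> LgPsi * norm (x - y)" for x y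
    unfolding Psi_eq LgPsi_def by (rule lipschitz_grad_Fsum_kron_comp[OF diff grad_lip])
  have "0 \<le> LgPsi"
    using lip by (rule lipschitz_const_nonneg)
  moreover have "1 \<le> \<rho>^7"
    using \<rho>_ge by simp
  ultimately have \<alpha>: "0 \<le> \<alpha>" "LgPsi * \<alpha>\<^sup>2 \<le> \<alpha>"
    unfolding \<alpha>_def by (rule step_size_inverse_lipschitz)+
  have "CARD('m) \<le> CARD('m) * CARD('n)"
    by simp
  with m2 have D2: "2 \<le> CARD('m) * CARD('n)"
    by linarith
  show ?thesis
    unfolding Let_def S_def[symmetric] LgPsi_def[symmetric] \<alpha>_def[symmetric]
    by (rule order_trans[OF _ perturbed_gd_descent_with_high_probability[OF P N_indep N_gauss
          \<sigma>_pos _ D2 gd lip \<alpha>]]) (use \<rho>_ge in simp_all)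
qed

end
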